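(* Let $C^{(n)}$ be a CNOT circuit on $n$ qubits which generates, from a starting label sequence $\ell=(\ell_1,\ldots,\ell_n)$, a set $L^{(n)}$ of labels not containing any of the labels $\ell_1,\ldots,\ell_n$ of the starting sequence. Then $\operatorname{size}(C^{(n)})\geq |L^{(n)}|$ and $D(C^{(n)})\geq |L^{(n)}|/(n/2)$.
   Context: $\mathrm{CX}_{i,j}$ ($i\neq j$) is the CNOT gate with control $i$ and target $j$ on qubits $1,\ldots,n$. A CNOT circuit is a finite sequence of moments $1,\ldots,d$, each a set of CNOT gates acting on pairwise disjoint qubits; $D(C)=d$ is its depth and $\operatorname{size}(C)$ its total number of gates. A label is a subset of $\{1,\ldots,n\}$; $ab$ denotes the symmetric difference of labels $a,b$. A label sequence is acted on from the right: $\ell\,\mathrm{CX}_{i,j}$ replaces $\ell_j$ by $\ell_i\ell_j$; a moment applies its gates, a circuit its moments in order. With $C_{1,m}$ the first $m$ moments, $C$ generates $L$ from $\ell$ if every element of $L$ occurs as an entry of $\ell C_{1,m}$ for some $m\in\{1,\ldots,D(C)\}$. *)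

theory Defs
  imports Complex_Main
begin

(* Qubits are 1..n. A label is a subset of {1..n}; a label sequence is a
   function nat => nat set, of which only indices 1..n are meaningful. *)
type_synonym label = "nat set"
type_synonym labelseq = "nat \<Rightarrow> label"

(* product of labels = symmetric difference *)
definition lmul :: "label \<Rightarrow> label \<Rightarrow> label" where
  "lmul a b = (a - b) \<union> (b - a)"

(* CNOT gate CX_{i,j} represented as the pair (i,j): control i, target j *)
type_synonym gate = "nat \<times> nat"
type_synonym moment = "gate set"
type_synonym circuit = "moment list"

definition qubits_of :: "gate \<Rightarrow> nat set" where
  "qubits_of g = {fst g, snd g}"

definition valid_gate :: "nat \<Rightarrow> gate \<Rightarrow> bool" where
  "valid_gate n g \<longleftrightarrow> fst g \<in> {1..n} \<and> snd g \<in> {1..n} \<and> fst g \<noteq> snd g"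

definition valid_moment :: "nat \<Rightarrow> moment \<Rightarrow> bool" where
  "valid_moment n M \<longleftrightarrow> (\<forall>g\<in>M. valid_gate n g) \<and>
     (\<forall>g\<in>M. \<forall>h\<in>M. g \<noteq> h \<longrightarrow> qubits_of g \<inter> qubits_of h = {})"

definition valid_circuit :: "nat \<Rightarrow> circuit \<Rightarrow> bool" where
  "valid_circuit n C \<longleftrightarrow> (\<forall>M\<in>set C. valid_moment n M)"

definition apply_gate :: "labelseq \<Rightarrow> gate \<Rightarrow> labelseq" where
  "apply_gate l g = l(snd g := lmul (l (fst g)) (l (snd g)))"

definition apply_moment :: "labelseq \<Rightarrow> moment \<Rightarrow> labelseq" where
  "apply_moment l M = (\<lambda>k. if \<exists>i. (i, k) \<in> M
        then lmul (l (THE i. (i, k) \<in> M)) (l k) else l k)"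

definition apply_circuit :: "labelseq \<Rightarrow> circuit \<Rightarrow> labelseq" where
  "apply_circuit l C = foldl apply_moment l C"

definition depth :: "circuit \<Rightarrow> nat" where
  "depth C = length C"

definition circuit_size :: "circuit \<Rightarrow> nat" where
  "circuit_size C = (\<Sum>M\<leftarrow>C. card M)"

definition generates :: "nat \<Rightarrow> circuit \<Rightarrow> labelseq \<Rightarrow> label set \<Rightarrow> bool" where
  "generates n C l L \<longleftrightarrow>
     (\<forall>x\<in>L. \<exists>m\<in>{1..depth C}. \<exists>k\<in>{1..n}. x = apply_circuit l (take m C) k)"

end

theory Submission
  imports Defs
begin

(* Every gate writes exactly one new label, on its target qubit, and every entry of an
   intermediate label sequence is either a starting label or the most recent such write.
   So a generated set avoiding the starting labels injects into the gates, giving the size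
   bound; a moment acts on disjoint pairs of qubits, so it has at most n/2 gates, giving the
   depth bound. *)

definition gate_outputs :: "labelseq \<Rightarrow> circuit \<Rightarrow> label set" where
  "gate_outputs l C =
     (\<Union>j<length C. (\<lambda>g. apply_circuit l (take (Suc j) C) (snd g)) ` (C ! j))"

lemma apply_circuit_take_Suc:
  assumes "m < length C"
  shows "apply_circuit l (take (Suc m) C) = apply_moment (apply_circuit l (take m C)) (C ! m)"
  using assms by (simp add: take_Suc_conv_app_nth apply_circuit_def)

lemma apply_circuit_take_in_gate_outputs:
  assumes "m \<le> length C"
  shows "apply_circuit l (take m C) k \<in> insert (l k) (gate_outputs l C)"
  using assms
proof (induction m)
  case 0
  then show ?case by (simp add: apply_circuit_def)
next
  case (Suc m)
  then have m: "m < length C" by simp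
  show ?case
  proof (cases "\<exists>i. (i, k) \<in> C ! m")
    case True
    then obtain i where "(i, k) \<in> C ! m" by blast
    then have "apply_circuit l (take (Suc m) C) k \<in> gate_outputs l C"
      using m unfolding gate_outputs_def by force
    then show ?thesis by simp
  next
    case False
    then have "apply_circuit l (take (Suc m) C) k = apply_circuit l (take m C) k"
      using m by (simp add: apply_circuit_take_Suc apply_moment_def)
    then show ?thesis using Suc by simp
  qed
qed

lemma generates_subset_gate_outputs:
  assumes "generates n C l L" and "\<forall>k\<in>{1..n}. l k \<notin> L"
  shows "L \<subseteq> gate_outputs l C"
proof
  fix x assume "x \<in> L"
  with assms(1) obtain m k where "m \<in> {1..depth C}" "k \<in> {1..n}"
    and x: "x = apply_circuit l (take m C) k"
    unfolding generates_def by blast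
  then have "x \<in> insert (l k) (gate_outputs l C)"
    using apply_circuit_take_in_gate_outputs by (simp add: depth_def)
  moreover have "x \<noteq> l k" using \<open>x \<in> L\<close> \<open>k \<in> {1..n}\<close> assms(2) by auto
  ultimately show "x \<in> gate_outputs l C" by simp
qed

lemma valid_moment_finite:
  assumes "valid_moment n M"
  shows "finite M"
proof -
  have "M \<subseteq> {1..n} \<times> {1..n}"
    using assms unfolding valid_moment_def valid_gate_def by force
  then show ?thesis by (rule finite_subset) simp
qed

lemma valid_moment_card_le:
  assumes "valid_moment n M"
  shows "2 * card M \<le> n"
proof -
  have "card (\<Union>g\<in>M. qubits_of g) = (\<Sum>g\<in>M. card (qubits_of g))"
    using assms valid_moment_finite[OF assms]
    by (intro card_UN_disjoint) (auto simp: valid_moment_def qubits_of_def)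
  also have "\<dots> = 2 * card M"
    using assms by (simp add: valid_moment_def valid_gate_def qubits_of_def)
  finally have "card (\<Union>g\<in>M. qubits_of g) = 2 * card M" .
  moreover have "(\<Union>g\<in>M. qubits_of g) \<subseteq> {1..n}"
    using assms by (auto simp: valid_moment_def valid_gate_def qubits_of_def)
  ultimately show ?thesis
    by (metis card_atLeastAtMost card_mono diff_Suc_1 finite_atLeastAtMost)
qed

lemma circuit_size_conv_sum_nth: "circuit_size C = (\<Sum>j<length C. card (C ! j))"
  by (simp add: circuit_size_def sum_list_sum_nth atLeast0LessThan)

lemma valid_circuit_finite_nth:
  assumes "valid_circuit n C" and "j < length C"
  shows "finite (C ! j)"
  using assms by (auto simp: valid_circuit_def intro: valid_moment_finite)

lemma finite_gate_outputs:
  assumes "valid_circuit n C"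
  shows "finite (gate_outputs l C)"
  using valid_circuit_finite_nth[OF assms] by (simp add: gate_outputs_def)

lemma card_gate_outputs_le_circuit_size:
  assumes "valid_circuit n C"
  shows "card (gate_outputs l C) \<le> circuit_size C"
proof -
  have "card (gate_outputs l C)
      \<le> (\<Sum>j<length C. card ((\<lambda>g. apply_circuit l (take (Suc j) C) (snd g)) ` (C ! j)))"
    unfolding gate_outputs_def by (rule card_UN_le) simp
  also have "\<dots> \<le> (\<Sum>j<length C. card (C ! j))"
    using valid_circuit_finite_nth[OF assms] by (intro sum_mono card_image_le) simp
  finally show ?thesis by (simp add: circuit_size_conv_sum_nth)
qed

lemma circuit_size_le_depth:
  assumes "valid_circuit n C"
  shows "2 * circuit_size C \<le> n * depth C"
proof -
  have "2 * circuit_size C = (\<Sum>M\<leftarrow>C. 2 * card M)"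
    by (simp add: circuit_size_def sum_list_const_mult)
  also have "\<dots> \<le> (\<Sum>M\<leftarrow>C. n)"
    using assms valid_moment_card_le by (intro sum_list_mono) (auto simp: valid_circuit_def)
  finally show ?thesis by (simp add: depth_def sum_list_triv mult.commute)
qed

theorem mainTheorem3:
  fixes n :: nat and C :: circuit and l :: labelseq and L :: "label set"
  assumes "valid_circuit n C"
    and "\<forall>k\<in>{1..n}. l k \<subseteq> {1..n}"
    and "\<forall>x\<in>L. x \<subseteq> {1..n}"
    and "generates n C l L"
    and "\<forall>k\<in>{1..n}. l k \<notin> L"
  shows "circuit_size C \<ge> card L \<and> real (depth C) \<ge> real (card L) / (real n / 2)"
proof -
  have "card L \<le> card (gate_outputs l C)"
    using generates_subset_gate_outputs[OF assms(4,5)] finite_gate_outputs[OF assms(1)]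
    by (rule card_mono[rotated])
  also have "\<dots> \<le> circuit_size C"
    using assms(1) by (rule card_gate_outputs_le_circuit_size)
  finally have size_bound: "card L \<le> circuit_size C" .
  then have "2 * card L \<le> n * depth C"
    using circuit_size_le_depth[OF assms(1)] by linarith
  then have "2 * real (card L) \<le> real n * real (depth C)"
    by (metis of_nat_le_iff of_nat_mult of_nat_numeral)
  then have "real (card L) / (real n / 2) \<le> real (depth C)"
    by (cases "n = 0") (simp_all add: divide_le_eq field_simps)
  with size_bound show ?thesis by simp
qed

end
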